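(* There exist a finite grid graph $G=P_a\square P_b$ (Cartesian product of two paths) and pebble distributions $D, D'$ on $G$ with $D(v)\le D'(v)$ for every vertex $v$, such that the covering ratio of $D'$ exceeds the covering ratio of $D$ by more than $1$, while the covering ratio ceiling of $D'$ is strictly smaller than the covering ratio ceiling of $D$.
   Context: A pebble distribution on a graph $G$ is a function $D:V(G)\to\mathbb{N}$; its size is $|D|=\sum_v D(v)$. A pebbling move along an edge $vu$ with $D(v)\ge 2$ removes two pebbles from $v$ and adds one pebble to $u$. A vertex $v$ is reachable under $D$ if $D(v)\ge 1$ or there is a sequence of pebbling moves whose last move places a pebble on $v$. The covering ratio of $D$ is (number of vertices reachable under $D$)$/|D|$. The weight function of $D$ is $W_D(u)=\sum_{v\in V(G)} D(v)2^{-d(u,v)}$, where $d$ is graph distance. The excess weight is $\widehat W_D(u)=W_D(u)-1$ if $W_D(u)>1$ and $\widehat W_D(u)=W_D(u)$ if $W_D(u)\le 1$. The covering ratio ceiling of $D$ is $\left(\sum_{v}W_D(v)-\sum_v \widehat W_D(v)\right)/\sum_v D(v)$. *)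

theory Defs
  imports Complex_Main
begin

text \<open>A graph is given by a finite vertex set V and a symmetric adjacency relation E
  (E u v only for u, v in V). A pebble distribution is a function D :: 'a \<Rightarrow> nat,
  meant to vanish outside V.\<close>

definition dist_size :: "'a set \<Rightarrow> ('a \<Rightarrow> nat) \<Rightarrow> nat" where
  "dist_size V D = (\<Sum>v\<in>V. D v)"

definition gdist :: "('a \<Rightarrow> 'a \<Rightarrow> bool) \<Rightarrow> 'a \<Rightarrow> 'a \<Rightarrow> nat" where
  "gdist E u v = (LEAST n. (E ^^ n) u v)"

definition pebble_move :: "('a \<Rightarrow> 'a \<Rightarrow> bool) \<Rightarrow> ('a \<Rightarrow> nat) \<Rightarrow> 'a \<Rightarrow> 'a \<Rightarrow> ('a \<Rightarrow> nat) \<Rightarrow> bool" where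
  "pebble_move E D v u D' \<longleftrightarrow> E v u \<and> D v \<ge> 2 \<and> D' = (\<lambda>w. if w = v then D v - 2 else if w = u then D u + 1 else D w)"

definition pebble_step :: "('a \<Rightarrow> 'a \<Rightarrow> bool) \<Rightarrow> ('a \<Rightarrow> nat) \<Rightarrow> ('a \<Rightarrow> nat) \<Rightarrow> bool" where
  "pebble_step E D D' \<longleftrightarrow> (\<exists>v u. pebble_move E D v u D')"

definition reachable :: "('a \<Rightarrow> 'a \<Rightarrow> bool) \<Rightarrow> ('a \<Rightarrow> nat) \<Rightarrow> 'a \<Rightarrow> bool" where
  "reachable E D v \<longleftrightarrow> D v \<ge> 1 \<or>
     (\<exists>D1 D2 w. (pebble_step E)\<^sup>*\<^sup>* D D1 \<and> pebble_move E D1 w v D2)"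

definition covering_ratio :: "'a set \<Rightarrow> ('a \<Rightarrow> 'a \<Rightarrow> bool) \<Rightarrow> ('a \<Rightarrow> nat) \<Rightarrow> real" where
  "covering_ratio V E D = real (card {v\<in>V. reachable E D v}) / real (dist_size V D)"

definition weight :: "'a set \<Rightarrow> ('a \<Rightarrow> 'a \<Rightarrow> bool) \<Rightarrow> ('a \<Rightarrow> nat) \<Rightarrow> 'a \<Rightarrow> real" where
  "weight V E D u = (\<Sum>v\<in>V. real (D v) * (1/2) ^ gdist E u v)"

definition excess_weight :: "'a set \<Rightarrow> ('a \<Rightarrow> 'a \<Rightarrow> bool) \<Rightarrow> ('a \<Rightarrow> nat) \<Rightarrow> 'a \<Rightarrow> real" where
  "excess_weight V E D u = (if weight V E D u > 1 then weight V E D u - 1 else weight V E D u)"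

definition covering_ratio_ceiling :: "'a set \<Rightarrow> ('a \<Rightarrow> 'a \<Rightarrow> bool) \<Rightarrow> ('a \<Rightarrow> nat) \<Rightarrow> real" where
  "covering_ratio_ceiling V E D =
     ((\<Sum>v\<in>V. weight V E D v) - (\<Sum>v\<in>V. excess_weight V E D v)) / real (dist_size V D)"

definition grid_vertices :: "nat \<Rightarrow> nat \<Rightarrow> (nat \<times> nat) set" where
  "grid_vertices a b = {0..<a} \<times> {0..<b}"

definition grid_adj :: "nat \<Rightarrow> nat \<Rightarrow> nat \<times> nat \<Rightarrow> nat \<times> nat \<Rightarrow> bool" where
  "grid_adj a b x y \<longleftrightarrow> x \<in> grid_vertices a b \<and> y \<in> grid_vertices a b \<and>
     ((fst x = fst y \<and> (snd y = snd x + 1 \<or> snd x = snd y + 1)) \<or>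
      (snd x = snd y \<and> (fst y = fst x + 1 \<or> fst x = fst y + 1)))"

end

theory Submission
  imports Defs
begin

text \<open>Put 3 resp. 4 pebbles on the centre (1,2) of the 3 \<times> 5 grid. A pebbling move never
  increases the weight W(u) at any vertex u, since it trades 2 pebbles at distance d for one
  at distance at least d - 1; hence every reachable vertex has weight at least 1. With 3 pebbles
  this confines the reachable vertices to the 5 vertices at distance \<le> 1 from the centre,
  whereas 4 pebbles reach all 11 vertices at distance \<le> 2, so the covering ratio jumps from
  at most 5/3 to at least 11/4. The ceiling's numerator counts the vertices of weight
  exceeding 1, which are the same 5 vertices in both cases, so the ceiling drops from 5/3
  to 5/4.\<close>

lemma covering_ratio_ceiling_eq_card:
  assumes "finite V"
  shows "covering_ratio_ceiling V E D =
           real (card {v\<in>V. weight V E D v > 1}) / real (dist_size V D)"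
proof -
  have "(\<Sum>v\<in>V. weight V E D v) - (\<Sum>v\<in>V. excess_weight V E D v)
      = (\<Sum>v\<in>V. if weight V E D v > 1 then 1 else 0)"
    unfolding sum_subtractf[symmetric] excess_weight_def by (rule sum.cong) auto
  also have "\<dots> = real (card {v\<in>V. weight V E D v > 1})"
    using sum.inter_filter[OF assms, of "\<lambda>_. (1::real)"] by simp
  finally show ?thesis
    unfolding covering_ratio_ceiling_def by simp
qed

lemma gdist_self [simp]: "gdist E v v = 0"
  unfolding gdist_def by (rule Least_eq_0) simp

lemma weight_pebble_move_le:
  assumes "finite V" and move: "pebble_move E D x y D'"
    and "x \<in> V" "y \<in> V" "x \<noteq> y" and lip: "gdist E u x \<le> gdist E u y + 1"
  shows "weight V E D' u \<le> weight V E D u"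
proof -
  let ?f = "\<lambda>w. ((1::real)/2) ^ gdist E u w"
  have "D x \<ge> 2" and D': "D' = (\<lambda>w. if w = x then D x - 2 else if w = y then D y + 1 else D w)"
    using move unfolding pebble_move_def by auto
  then have "real (D' w) * ?f w = real (D w) * ?f w - (if w = x then 2 * ?f x else 0)
               + (if w = y then ?f y else 0)" for w
    using \<open>x \<noteq> y\<close> by (auto simp: D' of_nat_diff algebra_simps)
  then have "weight V E D' u = weight V E D u - 2 * ?f x + ?f y"
    unfolding weight_def using assms(1,3,4)
    by (simp add: sum.distrib sum_subtractf sum.delta)
  moreover have "?f y \<le> 2 * ?f x"
  proof -
    have "((1::real)/2) ^ (gdist E u y + 1) \<le> (1/2) ^ gdist E u x"
      using lip by (intro power_decreasing) auto
    then show ?thesis by simp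
  qed
  ultimately show ?thesis by simp
qed

text \<open>The hypotheses on E say that edges join distinct vertices of V and that distances to u
  change by at most one along an edge; both hold in every connected simple graph.\<close>

lemma weight_ge_1_if_reachable:
  assumes "finite V" "u \<in> V"
    and edge: "\<And>x y. E x y \<Longrightarrow> x \<in> V \<and> y \<in> V \<and> x \<noteq> y"
    and lip: "\<And>x y. E x y \<Longrightarrow> gdist E u x \<le> gdist E u y + 1"
    and "reachable E D u"
  shows "1 \<le> weight V E D u"
proof -
  have move_le: "weight V E D2 u \<le> weight V E D1 u" if "pebble_move E D1 x y D2" for D1 D2 x y
  proof -
    have "E x y" using that unfolding pebble_move_def by simp
    then show ?thesis using weight_pebble_move_le[OF \<open>finite V\<close> that] edge lip by blast
  qed
  have steps_le: "weight V E D1 u \<le> weight V E D u" if "(pebble_step E)\<^sup>*\<^sup>* D D1" for D1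
    using that
  proof (induction rule: rtranclp_induct)
    case (step D1 D2)
    then show ?case using move_le unfolding pebble_step_def by (meson order_trans)
  qed simp
  have own_pebbles: "real (D1 u) \<le> weight V E D1 u" for D1
    using member_le_sum[of u V "\<lambda>v. real (D1 v) * (1/2) ^ gdist E u v"] assms(1,2)
    unfolding weight_def by simp
  consider "D u \<ge> 1"
    | D1 D2 w where "(pebble_step E)\<^sup>*\<^sup>* D D1" "pebble_move E D1 w u D2"
    using \<open>reachable E D u\<close> unfolding reachable_def by blast
  then show ?thesis
  proof cases
    case 1
    then show ?thesis using own_pebbles[of D] by linarith
  next
    case 2
    then have "w \<noteq> u" using edge unfolding pebble_move_def by blast
    then have "D2 u \<ge> 1" using 2(2) unfolding pebble_move_def by auto
    then have "1 \<le> weight V E D2 u" using own_pebbles[of D2] by linarith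
    also have "\<dots> \<le> weight V E D1 u" using move_le[OF 2(2)] .
    also have "\<dots> \<le> weight V E D u" using steps_le[OF 2(1)] .
    finally show ?thesis .
  qed
qed

lemma reachable_if_relpowp_le_2:
  assumes "(E ^^ n) c v" "n \<le> 2" "D c \<ge> 4"
    and irrefl: "\<And>x. \<not> E x x"
  shows "reachable E D v"
proof -
  have move: "pebble_move E D1 x y (\<lambda>z. if z = x then D1 x - 2 else if z = y then D1 y + 1 else D1 z)"
    if "E x y" "D1 x \<ge> 2" for D1 x y
    using that unfolding pebble_move_def by simp
  consider "n = 0" | "n = 1" | "n = 2" using \<open>n \<le> 2\<close> by linarith
  then show ?thesis
  proof cases
    case 1
    then show ?thesis using assms(1,3) unfolding reachable_def by simp
  next
    case 2
    then have "E c v" using assms(1) by (simp only: relpowp_1 One_nat_def[symmetric])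
    then show ?thesis using move[of c v D] \<open>D c \<ge> 4\<close> unfolding reachable_def by auto
  next
    case 3
    then have "(E ^^ Suc (Suc 0)) c v" using assms(1) by (simp only: numeral_2_eq_2)
    then obtain w where "E c w" "E w v" by (auto elim: relpowp_Suc_E2)
    have "c \<noteq> w" using irrefl \<open>E c w\<close> by blast
    define D1 where "D1 = (\<lambda>z. if z = c then D c - 2 else if z = w then D w + 1 else D z)"
    define D2 where "D2 = (\<lambda>z. if z = c then D1 c - 2 else if z = w then D1 w + 1 else D1 z)"
    \<comment> \<open>two moves from c to w leave at least two pebbles on w, enough for the final move to v\<close>
    have "pebble_move E D c w D1"
      using move[OF \<open>E c w\<close>, of D] \<open>D c \<ge> 4\<close> unfolding D1_def by simp
    moreover have "pebble_move E D1 c w D2"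
      using move[OF \<open>E c w\<close>, of D1] \<open>D c \<ge> 4\<close> unfolding D2_def D1_def by simp
    ultimately have "pebble_step E D D1" "pebble_step E D1 D2"
      unfolding pebble_step_def by blast+
    then have "(pebble_step E)\<^sup>*\<^sup>* D D2" by simp
    moreover have "D2 w \<ge> 2" using \<open>c \<noteq> w\<close> unfolding D2_def D1_def by simp
    ultimately show ?thesis using move[OF \<open>E w v\<close>] unfolding reachable_def by blast
  qed
qed

definition point_dist :: "'a \<Rightarrow> nat \<Rightarrow> 'a \<Rightarrow> nat" where
  "point_dist c k = (\<lambda>v. if v = c then k else 0)"

lemma dist_size_point_dist:
  "finite V \<Longrightarrow> c \<in> V \<Longrightarrow> dist_size V (point_dist c k) = k"
  unfolding dist_size_def point_dist_def by simp

lemma weight_point_dist: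
  assumes "finite V" "c \<in> V"
  shows "weight V E (point_dist c k) u = real k * (1/2) ^ gdist E u c"
proof -
  have "weight V E (point_dist c k) u
      = (\<Sum>v\<in>V. if v = c then real k * (1/2) ^ gdist E u c else 0)"
    unfolding weight_def point_dist_def by (rule sum.cong) auto
  then show ?thesis using assms by simp
qed

lemma one_less_mult_half_power_iff:
  assumes "2 < k" "k \<le> (4::real)"
  shows "1 < k * (1/2) ^ m \<longleftrightarrow> m \<le> 1"
proof -
  consider "m = 0" | "m = 1" | "m \<ge> 2" by linarith
  then show ?thesis
  proof cases
    case 3
    then have "((1::real)/2) ^ m \<le> (1/2) ^ 2" by (intro power_decreasing) auto
    then have "k * (1/2) ^ m \<le> k * (1/4)"
      using assms by (intro mult_left_mono) (auto simp: power2_eq_square)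
    then have "k * (1/2) ^ m \<le> 1" using assms by linarith
    then show ?thesis using 3 by auto
  qed (use assms in auto)
qed

lemma one_le_mult_half_power_iff:
  assumes "2 \<le> k" "k < (4::real)"
  shows "1 \<le> k * (1/2) ^ m \<longleftrightarrow> m \<le> 1"
proof -
  consider "m = 0" | "m = 1" | "m \<ge> 2" by linarith
  then show ?thesis
  proof cases
    case 3
    then have "((1::real)/2) ^ m \<le> (1/2) ^ 2" by (intro power_decreasing) auto
    then have "k * (1/2) ^ m \<le> k * (1/4)"
      using assms by (intro mult_left_mono) (auto simp: power2_eq_square)
    then have "k * (1/2) ^ m < 1" using assms by linarith
    then show ?thesis using 3 by auto
  qed (use assms in auto)
qed

definition manhattan_dist :: "nat \<times> nat \<Rightarrow> nat \<times> nat \<Rightarrow> nat" where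
  "manhattan_dist u v = nat (\<bar>int (fst u) - int (fst v)\<bar> + \<bar>int (snd u) - int (snd v)\<bar>)"

lemma manhattan_dist_triangle: "manhattan_dist u v \<le> manhattan_dist u w + manhattan_dist w v"
  unfolding manhattan_dist_def by arith

lemma manhattan_dist_commute: "manhattan_dist u v = manhattan_dist v u"
  unfolding manhattan_dist_def by arith

lemma manhattan_dist_self [simp]: "manhattan_dist u u = 0"
  unfolding manhattan_dist_def by simp

lemma manhattan_dist_eq_0_iff: "manhattan_dist u v = 0 \<longleftrightarrow> u = v"
  unfolding manhattan_dist_def by (cases u; cases v) auto

lemma finite_grid_vertices [simp]: "finite (grid_vertices a b)"
  unfolding grid_vertices_def by simp

lemma grid_adjD:
  assumes "grid_adj a b x y"
  shows "x \<in> grid_vertices a b" "y \<in> grid_vertices a b" "manhattan_dist x y = 1"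
  using assms unfolding grid_adj_def manhattan_dist_def by auto

lemma grid_adj_irrefl: "\<not> grid_adj a b x x"
  using grid_adjD(3)[of a b x x] by auto

lemma manhattan_dist_le_if_relpowp_grid_adj:
  "(grid_adj a b ^^ n) u v \<Longrightarrow> manhattan_dist u v \<le> n"
proof (induction n arbitrary: v)
  case (Suc n)
  then obtain w where "(grid_adj a b ^^ n) u w" "grid_adj a b w v"
    by (auto elim: relpowp_Suc_E)
  then show ?case using Suc.IH manhattan_dist_triangle[of u v w] grid_adjD(3) by fastforce
qed simp

lemma grid_adj_towards:
  assumes "u \<in> grid_vertices a b" "v \<in> grid_vertices a b" "manhattan_dist u v = Suc k"
  shows "\<exists>w. grid_adj a b u w \<and> manhattan_dist w v = k"
proof -
  obtain i j i' j' where uv: "u = (i, j)" "v = (i', j')" by (cases u, cases v)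
  have "i < a" "j < b" "i' < a" "j' < b" using assms(1,2) uv by (auto simp: grid_vertices_def)
  then consider "i < i'" | "i' < i" | "i = i'" "j < j'" | "i = i'" "j' < j"
    using assms(3) uv by (fastforce simp: manhattan_dist_def)
  then show ?thesis
  proof cases
    case 1
    then show ?thesis using \<open>i' < a\<close> \<open>j < b\<close> assms(3) uv
      by (intro exI[of _ "(i + 1, j)"]) (auto simp: grid_adj_def grid_vertices_def manhattan_dist_def)
  next
    case 2
    then show ?thesis using \<open>i < a\<close> \<open>j < b\<close> assms(3) uv
      by (intro exI[of _ "(i - 1, j)"]) (auto simp: grid_adj_def grid_vertices_def manhattan_dist_def)
  next
    case 3
    then show ?thesis using \<open>i < a\<close> \<open>j' < b\<close> assms(3) uv
      by (intro exI[of _ "(i, j + 1)"]) (auto simp: grid_adj_def grid_vertices_def manhattan_dist_def)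
  next
    case 4
    then show ?thesis using \<open>i < a\<close> \<open>j < b\<close> assms(3) uv
      by (intro exI[of _ "(i, j - 1)"]) (auto simp: grid_adj_def grid_vertices_def manhattan_dist_def)
  qed
qed

lemma relpowp_grid_adj_manhattan_dist:
  "u \<in> grid_vertices a b \<Longrightarrow> v \<in> grid_vertices a b
     \<Longrightarrow> (grid_adj a b ^^ manhattan_dist u v) u v"
proof (induction "manhattan_dist u v" arbitrary: u)
  case (Suc k)
  then obtain w where w: "grid_adj a b u w" "manhattan_dist w v = k"
    using grid_adj_towards by metis
  then show ?case using Suc grid_adjD(2)[OF w(1)] by (metis relpowp_Suc_I2)
qed (simp add: manhattan_dist_eq_0_iff)

lemma gdist_grid_adj:
  "u \<in> grid_vertices a b \<Longrightarrow> v \<in> grid_vertices a b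
     \<Longrightarrow> gdist (grid_adj a b) u v = manhattan_dist u v"
  unfolding gdist_def
  by (rule Least_equality)
     (auto intro: relpowp_grid_adj_manhattan_dist dest: manhattan_dist_le_if_relpowp_grid_adj)

lemma gdist_grid_adj_lipschitz:
  assumes "u \<in> grid_vertices a b" "grid_adj a b x y"
  shows "gdist (grid_adj a b) u x \<le> gdist (grid_adj a b) u y + 1"
  using grid_adjD[OF assms(2)] manhattan_dist_triangle[of u x y] manhattan_dist_commute[of x y]
  by (simp add: gdist_grid_adj assms(1))

lemma weight_ge_1_if_reachable_grid:
  assumes "u \<in> grid_vertices a b" "reachable (grid_adj a b) D u"
  shows "1 \<le> weight (grid_vertices a b) (grid_adj a b) D u"
proof (rule weight_ge_1_if_reachable)
  show "x \<in> grid_vertices a b \<and> y \<in> grid_vertices a b \<and> x \<noteq> y" if "grid_adj a b x y" for x y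
    using grid_adjD[OF that] grid_adj_irrefl[of a b x] that by blast
  show "gdist (grid_adj a b) u x \<le> gdist (grid_adj a b) u y + 1" if "grid_adj a b x y" for x y
    using gdist_grid_adj_lipschitz[OF assms(1) that] .
qed (use assms in simp_all)

definition centre :: "nat \<times> nat" where "centre = (1, 2)"

lemma centre_in_grid: "centre \<in> grid_vertices 3 5"
  unfolding grid_vertices_def centre_def by simp

lemma dist_size_centre_dist: "dist_size (grid_vertices 3 5) (point_dist centre k) = k"
  using dist_size_point_dist[OF finite_grid_vertices centre_in_grid] .

lemma grid_vertices_3_5: "grid_vertices 3 5 = set [(i, j). i \<leftarrow> [0..<3], j \<leftarrow> [0..<5]]"
  unfolding grid_vertices_def by auto

lemma card_grid_ball_1: "card {v \<in> grid_vertices 3 5. manhattan_dist v centre \<le> 1} = 5"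
  unfolding grid_vertices_3_5 set_filter[symmetric] by (simp add: manhattan_dist_def centre_def upt_rec)

lemma card_grid_ball_2: "card {v \<in> grid_vertices 3 5. manhattan_dist v centre \<le> 2} = 11"
  unfolding grid_vertices_3_5 set_filter[symmetric] by (simp add: manhattan_dist_def centre_def upt_rec)

lemma weight_centre_dist:
  "u \<in> grid_vertices 3 5 \<Longrightarrow>
     weight (grid_vertices 3 5) (grid_adj 3 5) (point_dist centre k) u
       = real k * (1/2) ^ manhattan_dist u centre"
  using weight_point_dist[OF finite_grid_vertices centre_in_grid] gdist_grid_adj[OF _ centre_in_grid]
  by simp

lemma covering_ratio_ceiling_centre_dist:
  assumes "k \<in> {3, 4}"
  shows "covering_ratio_ceiling (grid_vertices 3 5) (grid_adj 3 5) (point_dist centre k)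
           = 5 / real k"
proof -
  have "2 < real k" "real k \<le> 4" using assms by auto
  then have "1 < weight (grid_vertices 3 5) (grid_adj 3 5) (point_dist centre k) v
          \<longleftrightarrow> manhattan_dist v centre \<le> 1" if "v \<in> grid_vertices 3 5" for v
    using one_less_mult_half_power_iff by (simp add: weight_centre_dist[OF that])
  then have heavy: "{v \<in> grid_vertices 3 5. weight (grid_vertices 3 5) (grid_adj 3 5) (point_dist centre k) v > 1}
      = {v \<in> grid_vertices 3 5. manhattan_dist v centre \<le> 1}"
    by blast
  then show ?thesis
    unfolding covering_ratio_ceiling_eq_card[OF finite_grid_vertices] heavy card_grid_ball_1
      dist_size_centre_dist by simp
qed

lemma covering_ratio_centre_3_le:
  "covering_ratio (grid_vertices 3 5) (grid_adj 3 5) (point_dist centre 3) \<le> 5 / 3"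
proof -
  have reachable_in_ball: "{v \<in> grid_vertices 3 5. reachable (grid_adj 3 5) (point_dist centre 3) v}
      \<subseteq> {v \<in> grid_vertices 3 5. manhattan_dist v centre \<le> 1}"
  proof safe
    fix v assume v: "v \<in> grid_vertices 3 5" "reachable (grid_adj 3 5) (point_dist centre 3) v"
    have "1 \<le> weight (grid_vertices 3 5) (grid_adj 3 5) (point_dist centre 3) v"
      using weight_ge_1_if_reachable_grid[OF v] .
    then have "1 \<le> (3::real) * (1/2) ^ manhattan_dist v centre"
      unfolding weight_centre_dist[OF v(1)] by simp
    then show "manhattan_dist v centre \<le> 1" using one_le_mult_half_power_iff[of 3] by simp
  qed
  have "card {v \<in> grid_vertices 3 5. reachable (grid_adj 3 5) (point_dist centre 3) v} \<le> 5"
    using card_mono[OF _ reachable_in_ball] card_grid_ball_1 by simp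
  then show ?thesis
    by (simp add: covering_ratio_def dist_size_centre_dist)
qed

lemma covering_ratio_centre_4_ge:
  "11 / 4 \<le> covering_ratio (grid_vertices 3 5) (grid_adj 3 5) (point_dist centre 4)"
proof -
  have ball_reachable: "{v \<in> grid_vertices 3 5. manhattan_dist v centre \<le> 2}
      \<subseteq> {v \<in> grid_vertices 3 5. reachable (grid_adj 3 5) (point_dist centre 4) v}"
  proof safe
    fix v assume v: "v \<in> grid_vertices 3 5" "manhattan_dist v centre \<le> 2"
    have "(grid_adj 3 5 ^^ manhattan_dist centre v) centre v"
      using relpowp_grid_adj_manhattan_dist[OF centre_in_grid v(1)] .
    moreover have "manhattan_dist centre v \<le> 2"
      using v(2) by (simp only: manhattan_dist_commute)
    moreover have "4 \<le> point_dist centre 4 centre"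
      by (simp add: point_dist_def)
    ultimately show "reachable (grid_adj 3 5) (point_dist centre 4) v"
      using reachable_if_relpowp_le_2 grid_adj_irrefl by metis
  qed
  have "11 \<le> card {v \<in> grid_vertices 3 5. reachable (grid_adj 3 5) (point_dist centre 4) v}"
    using card_mono[OF _ ball_reachable] card_grid_ball_2 by simp
  then show ?thesis
    by (simp add: covering_ratio_def dist_size_centre_dist)
qed

theorem mainTheorem3:
  shows "\<exists>(a::nat) (b::nat) (D::nat \<times> nat \<Rightarrow> nat) (D'::nat \<times> nat \<Rightarrow> nat).
     a \<ge> 1 \<and> b \<ge> 1 \<and>
     (\<forall>v. v \<notin> grid_vertices a b \<longrightarrow> D v = 0 \<and> D' v = 0) \<and>
     dist_size (grid_vertices a b) D > 0 \<and>
     (\<forall>v. D v \<le> D' v) \<and>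
     covering_ratio (grid_vertices a b) (grid_adj a b) D' >
       covering_ratio (grid_vertices a b) (grid_adj a b) D + 1 \<and>
     covering_ratio_ceiling (grid_vertices a b) (grid_adj a b) D' <
       covering_ratio_ceiling (grid_vertices a b) (grid_adj a b) D"
proof (intro exI conjI)
  let ?D = "point_dist centre 3" and ?D' = "point_dist centre 4"
  show "\<forall>v. v \<notin> grid_vertices 3 5 \<longrightarrow> ?D v = 0 \<and> ?D' v = 0"
    using centre_in_grid by (auto simp: point_dist_def)
  show "dist_size (grid_vertices 3 5) ?D > 0"
    by (simp add: dist_size_centre_dist)
  show "\<forall>v. ?D v \<le> ?D' v" by (simp add: point_dist_def)
  show "covering_ratio (grid_vertices 3 5) (grid_adj 3 5) ?D' >
          covering_ratio (grid_vertices 3 5) (grid_adj 3 5) ?D + 1"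
    using covering_ratio_centre_3_le covering_ratio_centre_4_ge by linarith
  show "covering_ratio_ceiling (grid_vertices 3 5) (grid_adj 3 5) ?D' <
          covering_ratio_ceiling (grid_vertices 3 5) (grid_adj 3 5) ?D"
    by (simp add: covering_ratio_ceiling_centre_dist)
qed simp_all

end
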